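(* There exists a copula $C\in\mathcal{C}^3_{\rm c}$ with $d_\infty(C,\psi(C))\ge\frac{3}{16}$; in particular $\sup_{C\in\mathcal{C}^3_{\rm c}}d_\infty(C,\psi(C))\ge\frac{3}{16}$.
   Context: $\mathbb{I}=[0,1]$, $\lambda$ Lebesgue measure; $d_\infty(C_1,C_2)=\max_{\mathbf{x}\in\mathbb{I}^3}|C_1(\mathbf{x})-C_2(\mathbf{x})|$. Points of $\mathbb{I}^3$ are written $(\mathbf{u},v)$, $\mathbf{u}=(u_1,u_2)$. For a three-dimensional copula $C$, $K_C$ is (a version of) the regular conditional distribution of $(U_1,U_2)$ given $U_3=v$, $(U_1,U_2,U_3)\sim C$; $F_{1|3}(u_1|t)=K_C(t,[0,u_1]\times\mathbb{I})$, $F_{2|3}(u_2|t)=K_C(t,\mathbb{I}\times[0,u_2])$. $\mathcal{C}^3_{\rm c}$ is the set of three-dimensional copulas for which $F_{1|3}(\cdot|t)$ and $F_{2|3}(\cdot|t)$ are continuous for $\lambda$-a.e. $t$; for such $C$, for a.e. $t$ the conditional copula $C^t_{12;3}$ is the unique bivariate copula with $K_C(t,[\mathbf{0},\mathbf{u}])=C^t_{12;3}(F_{1|3}(u_1|t),F_{2|3}(u_2|t))$. The partial copula is $C_p(\mathbf{s})=\int_{\mathbb{I}}C^t_{12;3}(\mathbf{s})\,d\lambda(t)$ and the partial vine copula $\psi(C)$ is defined by $\psi(C)(\mathbf{u},v)=\int_{[0,v]}C_p(F_{1|3}(u_1|t),F_{2|3}(u_2|t))\,d\lambda(t)$. *)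

theory Defs
  imports "HOL-Probability.Probability"
begin

abbreviation unit_I :: "real set" where "unit_I \<equiv> {0..1}"

definition copula2 :: "(real \<Rightarrow> real \<Rightarrow> real) \<Rightarrow> bool" where
  "copula2 C \<longleftrightarrow>
     (\<forall>u\<in>unit_I. C u 0 = 0 \<and> C 0 u = 0 \<and> C u 1 = u \<and> C 1 u = u) \<and>
     (\<forall>a1\<in>unit_I. \<forall>b1\<in>unit_I. \<forall>a2\<in>unit_I. \<forall>b2\<in>unit_I.
        a1 \<le> b1 \<longrightarrow> a2 \<le> b2 \<longrightarrow>
        C b1 b2 - C a1 b2 - C b1 a2 + C a1 a2 \<ge> 0)"

definition copula3 :: "(real \<Rightarrow> real \<Rightarrow> real \<Rightarrow> real) \<Rightarrow> bool" where
  "copula3 C \<longleftrightarrow>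
     (\<forall>x\<in>unit_I. \<forall>y\<in>unit_I. C 0 x y = 0 \<and> C x 0 y = 0 \<and> C x y 0 = 0) \<and>
     (\<forall>u\<in>unit_I. C u 1 1 = u \<and> C 1 u 1 = u \<and> C 1 1 u = u) \<and>
     (\<forall>a1\<in>unit_I. \<forall>b1\<in>unit_I. \<forall>a2\<in>unit_I. \<forall>b2\<in>unit_I. \<forall>a3\<in>unit_I. \<forall>b3\<in>unit_I.
        a1 \<le> b1 \<longrightarrow> a2 \<le> b2 \<longrightarrow> a3 \<le> b3 \<longrightarrow>
        C b1 b2 b3 - C a1 b2 b3 - C b1 a2 b3 - C b1 b2 a3
        + C a1 a2 b3 + C a1 b2 a3 + C b1 a2 a3 - C a1 a2 a3 \<ge> 0)"

text \<open>K is a version of the regular conditional distribution of (U1,U2) given U3 = t,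
  where (U1,U2,U3) ~ C: a Markov kernel from [0,1] to the Borel sets of R^2 with
  C(u1,u2,v) = int_{[0,v]} K(t,[0,u1]x[0,u2]) dt for all (u1,u2,v) in the unit cube
  (this determines the joint law of (U1,U2,U3) and hence K up to a null set).\<close>
definition cond_kernel :: "(real \<Rightarrow> real \<Rightarrow> real \<Rightarrow> real) \<Rightarrow> (real \<Rightarrow> (real \<times> real) measure) \<Rightarrow> bool" where
  "cond_kernel C K \<longleftrightarrow>
     K \<in> restrict_space lborel unit_I \<rightarrow>\<^sub>M prob_algebra (borel :: (real \<times> real) measure) \<and>
     (\<forall>u1\<in>unit_I. \<forall>u2\<in>unit_I. \<forall>v\<in>unit_I.
        (\<lambda>t. measure (K t) ({0..u1} \<times> {0..u2})) integrable_on {0..v} \<and>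
        C u1 u2 v = integral {0..v} (\<lambda>t. measure (K t) ({0..u1} \<times> {0..u2})))"

definition F13 :: "(real \<Rightarrow> (real \<times> real) measure) \<Rightarrow> real \<Rightarrow> real \<Rightarrow> real" where
  "F13 K t u1 = measure (K t) ({0..u1} \<times> unit_I)"

definition F23 :: "(real \<Rightarrow> (real \<times> real) measure) \<Rightarrow> real \<Rightarrow> real \<Rightarrow> real" where
  "F23 K t u2 = measure (K t) (unit_I \<times> {0..u2})"

definition copula3_c :: "(real \<Rightarrow> real \<Rightarrow> real \<Rightarrow> real) \<Rightarrow> bool" where
  "copula3_c C \<longleftrightarrow> copula3 C \<and>
     (\<exists>K. cond_kernel C K \<and>
        (AE t in lborel. t \<in> unit_I \<longrightarrow>
            continuous_on UNIV (F13 K t) \<and> continuous_on UNIV (F23 K t)))"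

definition cond_copulas :: "(real \<Rightarrow> (real \<times> real) measure) \<Rightarrow> (real \<Rightarrow> real \<Rightarrow> real \<Rightarrow> real) \<Rightarrow> bool" where
  "cond_copulas K D \<longleftrightarrow>
     (AE t in lborel. t \<in> unit_I \<longrightarrow> copula2 (D t) \<and>
        (\<forall>u1\<in>unit_I. \<forall>u2\<in>unit_I.
           measure (K t) ({0..u1} \<times> {0..u2}) = D t (F13 K t u1) (F23 K t u2)))"

definition partial_copula :: "(real \<Rightarrow> real \<Rightarrow> real \<Rightarrow> real) \<Rightarrow> real \<Rightarrow> real \<Rightarrow> real" where
  "partial_copula D s1 s2 = integral unit_I (\<lambda>t. D t s1 s2)"

definition psi :: "(real \<Rightarrow> (real \<times> real) measure) \<Rightarrow> (real \<Rightarrow> real \<Rightarrow> real \<Rightarrow> real) \<Rightarrow> real \<Rightarrow> real \<Rightarrow> real \<Rightarrow> real" where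
  "psi K D u1 u2 v = integral {0..v} (\<lambda>t. partial_copula D (F13 K t u1) (F23 K t u2))"

definition d_inf :: "(real \<Rightarrow> real \<Rightarrow> real \<Rightarrow> real) \<Rightarrow> (real \<Rightarrow> real \<Rightarrow> real \<Rightarrow> real) \<Rightarrow> real" where
  "d_inf C1 C2 = (SUP x \<in> unit_I \<times> unit_I \<times> unit_I.
                    \<bar>C1 (fst x) (fst (snd x)) (snd (snd x)) - C2 (fst x) (fst (snd x)) (snd (snd x))\<bar>)"

end

theory Submission
  imports Defs
begin

(* On the j-th quarter of the v-axis let (U1, U2) be uniform on four cells of the 8 x 8 grid, the k-th
   of the increasing columns ex_cols j being paired with the row of rank ex_perm j k among the increasing
   rows ex_rows j. The conditional copula is then the 4 x 4 shuffle copula of ex_perm j, while the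
   conditional margins vary with j; every column and every row is used in exactly two quarters, so the
   mixture has uniform margins. At (1/2, 1/2, 1) the copula counts the 6 of the 16 cells lying in the
   lower left quadrant, giving 3/8, whereas the partial vine copula averages the four shuffle copulas at
   the conditional margins and gives 3/16.
   This does not depend on the chosen versions: two conditional kernels of the same copula have the same
   integrals over every [0, v], hence agree almost everywhere on rectangles (uniqueness of distribution
   functions). On the rectangles with corners on the grid the conditional margins take every value
   1/4, 1/2, 3/4, which determines any conditional copula on these levels, and the margins at 1/2 only
   take these values. *)

section \<open>Ramps and shuffle copulas\<close>

definition ramp :: "real \<Rightarrow> real" where
  "ramp z = max 0 (min 1 z)"

lemma ramp_nonneg [simp]: "0 \<le> ramp z"
  and ramp_le_one [simp]: "ramp z \<le> 1"
  by (auto simp: ramp_def)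

lemma ramp_eq_0: "z \<le> 0 \<Longrightarrow> ramp z = 0"
  and ramp_eq_1: "1 \<le> z \<Longrightarrow> ramp z = 1"
  and ramp_eq_self: "0 \<le> z \<Longrightarrow> z \<le> 1 \<Longrightarrow> ramp z = z"
  by (auto simp: ramp_def)

lemma mono_ramp: "mono ramp"
  by (auto simp: mono_def ramp_def)

lemma continuous_on_ramp [continuous_intros]:
  "continuous_on S f \<Longrightarrow> continuous_on S (\<lambda>x. ramp (f x))"
  unfolding ramp_def by (intro continuous_intros)

lemma sum_ramp_shifts: "(\<Sum>k<n. ramp (z - real k)) = max 0 (min (real n) z)"
  by (induction n) (auto simp: ramp_def max_def min_def)

corollary sum_ramp_shifts_eq: "0 \<le> z \<Longrightarrow> z \<le> real n \<Longrightarrow> (\<Sum>k<n. ramp (z - real k)) = z"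
  by (simp add: sum_ramp_shifts)

(* For a i at least 1 apart and F z = (\<Sum>i<n. ramp (z - a i)) / n, ramp (n * F z - k) is the ramp of the
   k-th interval alone: this is why a shuffle copula at the margins of grid cells gives back their measure. *)
lemma ramp_sum_staircase:
  fixes a :: "nat \<Rightarrow> real"
  assumes gaps: "\<And>i. Suc i < n \<Longrightarrow> a i + 1 \<le> a (Suc i)" and k: "k < n"
  shows "ramp ((\<Sum>i<n. ramp (z - a i)) - real k) = ramp (z - a k)"
proof -
  have spread: "a i + real (j - i) \<le> a j" if "i \<le> j" "j < n" for i j
    using that
  proof (induction j rule: dec_induct)
    case (step j)
    then show ?case using gaps[of j] by (simp add: Suc_diff_le)
  qed simp
  have below: "ramp (z - a i) = 1" if "i < k" "a k \<le> z" for i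
    using spread[of i k] that k by (intro ramp_eq_1) simp
  have above: "ramp (z - a i) = 0" if "k < i" "i < n" "z \<le> a k + 1" for i
    using spread[of k i] that by (intro ramp_eq_0) simp
  define L where "L = (\<Sum>i<k. ramp (z - a i))"
  define U where "U = (\<Sum>i\<in>{Suc k..<n}. ramp (z - a i))"
  have split: "(\<Sum>i<n. ramp (z - a i)) = L + ramp (z - a k) + U"
    using sum.atLeastLessThan_concat[of 0 "Suc k" n "\<lambda>i. ramp (z - a i)"] k
    by (simp add: L_def U_def lessThan_atLeast0)
  have "L \<le> real k"
    using sum_mono[of "{..<k}" "\<lambda>i. ramp (z - a i)" "\<lambda>_. 1"] by (simp add: L_def)
  moreover have "L = real k" if "a k \<le> z"
    using below that by (simp add: L_def)
  moreover have "U = 0" if "z \<le> a k + 1"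
    using above that by (simp add: U_def)
  moreover have "0 \<le> U"
    by (simp add: U_def sum_nonneg)
  ultimately show ?thesis
    unfolding split by (cases "z < a k"; cases "z \<le> a k + 1") (auto simp: ramp_def)
qed

lemma two_increasing_sum_of_products:
  fixes f g :: "'i \<Rightarrow> real \<Rightarrow> real"
  assumes "\<And>i. i \<in> S \<Longrightarrow> mono (f i)" "\<And>i. i \<in> S \<Longrightarrow> mono (g i)"
    and "a1 \<le> b1" "a2 \<le> b2"
  defines "H \<equiv> \<lambda>x y. \<Sum>i\<in>S. f i x * g i y"
  shows "H b1 b2 - H a1 b2 - H b1 a2 + H a1 a2 \<ge> 0"
proof -
  have "H b1 b2 - H a1 b2 - H b1 a2 + H a1 a2 = (\<Sum>i\<in>S. (f i b1 - f i a1) * (g i b2 - g i a2))"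
    by (simp add: H_def algebra_simps sum_subtractf sum.distrib)
  also have "\<dots> \<ge> 0"
    using assms by (intro sum_nonneg mult_nonneg_nonneg) (auto simp: mono_def)
  finally show ?thesis .
qed

lemma three_increasing_sum_of_products:
  fixes h :: "'i \<Rightarrow> real \<Rightarrow> real" and G :: "'i \<Rightarrow> real \<Rightarrow> real \<Rightarrow> real"
  assumes "\<And>i. i \<in> S \<Longrightarrow> mono (h i)"
    and "\<And>i. i \<in> S \<Longrightarrow> G i b1 b2 - G i a1 b2 - G i b1 a2 + G i a1 a2 \<ge> 0" and "a3 \<le> b3"
  defines "H \<equiv> \<lambda>x y z. \<Sum>i\<in>S. G i x y * h i z"
  shows "H b1 b2 b3 - H a1 b2 b3 - H b1 a2 b3 - H b1 b2 a3
    + H a1 a2 b3 + H a1 b2 a3 + H b1 a2 a3 - H a1 a2 a3 \<ge> 0"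
proof -
  have "H b1 b2 b3 - H a1 b2 b3 - H b1 a2 b3 - H b1 b2 a3 + H a1 a2 b3 + H a1 b2 a3 + H b1 a2 a3 - H a1 a2 a3
    = (\<Sum>i\<in>S. (G i b1 b2 - G i a1 b2 - G i b1 a2 + G i a1 a2) * (h i b3 - h i a3))"
    by (simp add: H_def algebra_simps sum_subtractf sum.distrib)
  also have "\<dots> \<ge> 0"
    using assms by (intro sum_nonneg mult_nonneg_nonneg) (auto simp: mono_def)
  finally show ?thesis .
qed

lemma mono_ramp_affine: "0 \<le> c \<Longrightarrow> mono (\<lambda>x. ramp (c * x - d))"
  by (auto simp: mono_def intro!: monoD[OF mono_ramp] mult_left_mono)

lemma mono_ramp_affine_scaled: "0 \<le> c \<Longrightarrow> 0 \<le> e \<Longrightarrow> mono (\<lambda>x. ramp (c * x - d) / e)"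
  using mono_ramp_affine by (auto simp: mono_def intro: divide_right_mono)

(* The distribution function of the uniform distribution on the squares [k/n, (k+1)/n] x [p k/n, (p k+1)/n]. *)
definition shuffle_copula :: "nat \<Rightarrow> (nat \<Rightarrow> nat) \<Rightarrow> real \<Rightarrow> real \<Rightarrow> real" where
  "shuffle_copula n p x y = (\<Sum>k<n. ramp (n * x - k) * ramp (n * y - p k) / n)"

lemma shuffle_copula_copula2:
  assumes "0 < n" and p: "bij_betw p {..<n} {..<n}"
  shows "copula2 (shuffle_copula n p)"
  unfolding copula2_def
proof (intro conjI ballI impI)
  fix u :: real assume u: "u \<in> unit_I"
  have p_less: "p k < n" if "k < n" for k
    using p that by (auto dest: bij_betwE)
  have uniform: "(\<Sum>k<n. ramp (n * u - k) / n) = u"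
    using sum_ramp_shifts_eq[of "n * u" n] u assms(1)
    by (simp add: sum_divide_distrib[symmetric])
  show "shuffle_copula n p u 0 = 0" "shuffle_copula n p 0 u = 0"
    unfolding shuffle_copula_def by (auto intro!: sum.neutral simp: ramp_eq_0)
  have "shuffle_copula n p u 1 = (\<Sum>k<n. ramp (n * u - k) / n)"
    unfolding shuffle_copula_def
  proof (intro sum.cong refl)
    fix k assume "k \<in> {..<n}"
    then have "ramp (real n * 1 - real (p k)) = 1"
      using p_less[of k] by (intro ramp_eq_1) (simp flip: of_nat_Suc)
    then show "ramp (real n * u - real k) * ramp (real n * 1 - real (p k)) / real n
        = ramp (real n * u - real k) / real n"
      by simp
  qed
  then show "shuffle_copula n p u 1 = u" using uniform by simp
  have "shuffle_copula n p 1 u = (\<Sum>k<n. ramp (n * u - p k) / n)"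
    unfolding shuffle_copula_def by (intro sum.cong refl) (simp add: ramp_eq_1)
  also have "\<dots> = (\<Sum>k<n. ramp (n * u - k) / n)"
    using sum.reindex_bij_betw[OF p, of "\<lambda>k. ramp (n * u - k) / n"] by simp
  finally show "shuffle_copula n p 1 u = u" using uniform by simp
next
  fix a1 b1 a2 b2 :: real assume "a1 \<le> b1" "a2 \<le> b2"
  then show "0 \<le> shuffle_copula n p b1 b2 - shuffle_copula n p a1 b2 - shuffle_copula n p b1 a2
      + shuffle_copula n p a1 a2"
    unfolding shuffle_copula_def
    using two_increasing_sum_of_products[where S="{..<n}"
        and f="\<lambda>k x. ramp (n * x - k) / n" and g="\<lambda>k y. ramp (n * y - p k)"]
    by (simp add: mono_ramp_affine mono_ramp_affine_scaled)
qed

section \<open>Uniform distributions on grid cells\<close>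

definition cell_box :: "real \<Rightarrow> real \<Rightarrow> real \<Rightarrow> (real \<times> real) set" where
  "cell_box m c r = {c / m..(c + 1) / m} \<times> {r / m..(r + 1) / m}"

definition cells_measure :: "real \<Rightarrow> nat \<Rightarrow> (nat \<Rightarrow> real) \<Rightarrow> (nat \<Rightarrow> real) \<Rightarrow> (real \<times> real) measure"
  where "cells_measure m n cs rs =
    density lborel (\<lambda>p. \<Sum>k<n. ennreal (m\<^sup>2 / n) * indicator (cell_box m (cs k) (rs k)) p)"

lemma cell_box_borel [measurable]: "cell_box m c r \<in> sets borel"
  unfolding cell_box_def by (intro borel_closed closed_Times) auto

lemma sets_cells_measure [simp]: "sets (cells_measure m n cs rs) = sets borel"
  and space_cells_measure [simp]: "space (cells_measure m n cs rs) = UNIV"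
  by (simp_all add: cells_measure_def)

lemma emeasure_lborel_Times:
  fixes A B :: "real set"
  assumes "A \<in> sets borel" "B \<in> sets borel"
  shows "emeasure lborel (A \<times> B) = emeasure lborel A * emeasure lborel B"
  using assms by (simp add: lborel_prod[symmetric] lborel.emeasure_pair_measure_Times)

lemma emeasure_cells_measure_Times:
  fixes A B :: "real set"
  assumes A: "A \<in> sets borel" and B: "B \<in> sets borel"
  shows "emeasure (cells_measure m n cs rs) (A \<times> B) = (\<Sum>k<n. ennreal (m\<^sup>2 / n)
    * emeasure lborel ({cs k / m..(cs k + 1) / m} \<inter> A) * emeasure lborel ({rs k / m..(rs k + 1) / m} \<inter> B))"
proof -
  have AB: "A \<times> B \<in> sets borel"
    using A B by (metis borel_prod pair_measureI)
  have cell_AB: "cell_box m (cs k) (rs k) \<inter> (A \<times> B)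
      = ({cs k / m..(cs k + 1) / m} \<inter> A) \<times> ({rs k / m..(rs k + 1) / m} \<inter> B)" for k
    by (auto simp: cell_box_def)
  have "emeasure (cells_measure m n cs rs) (A \<times> B) = (\<integral>\<^sup>+ p.
      (\<Sum>k<n. ennreal (m\<^sup>2 / n) * indicator (cell_box m (cs k) (rs k)) p) * indicator (A \<times> B) p \<partial>lborel)"
    unfolding cells_measure_def using AB by (subst emeasure_density) auto
  also have "\<dots>
      = (\<integral>\<^sup>+ p. (\<Sum>k<n. ennreal (m\<^sup>2 / n) * indicator (cell_box m (cs k) (rs k) \<inter> (A \<times> B)) p) \<partial>lborel)"
    by (intro nn_integral_cong) (auto simp: sum_distrib_right split: split_indicator)
  also have "\<dots> = (\<Sum>k<n. ennreal (m\<^sup>2 / n) * emeasure lborel (cell_box m (cs k) (rs k) \<inter> (A \<times> B)))"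
    using AB by (subst nn_integral_sum) (auto intro!: sum.cong nn_integral_cmult_indicator)
  finally show ?thesis
    using A B by (simp add: cell_AB emeasure_lborel_Times mult.assoc)
qed

lemma emeasure_lborel_cell_Int_Icc:
  assumes "0 < m" "0 \<le> c"
  shows "emeasure lborel ({c / m..(c + 1) / m} \<inter> {0..u}) = ennreal (ramp (m * u - c) / m)"
proof (cases "c / m \<le> u")
  case True
  with assms have "{c / m..(c + 1) / m} \<inter> {0..u} = {c / m..min ((c + 1) / m) u}"
    by (auto simp: divide_nonneg_pos)
  moreover have "min ((c + 1) / m) u - c / m = ramp (m * u - c) / m"
    using True assms by (auto simp: ramp_def min_def max_def field_simps)
  ultimately show ?thesis
    using True assms by (simp add: divide_le_cancel)
next
  case False
  with assms have "ramp (m * u - c) = 0"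
    by (intro ramp_eq_0) (simp add: not_le field_simps)
  with False show ?thesis by simp
qed

lemma ennreal_cell_product:
  fixes n :: nat
  assumes "0 < m" "0 \<le> a" "0 \<le> b"
  shows "ennreal (m\<^sup>2 / n) * ennreal (a / m) * ennreal (b / m) = ennreal (a * b / n)"
proof -
  have "ennreal (m\<^sup>2 / n * (a / m)) = ennreal (m\<^sup>2 / n) * ennreal (a / m)"
    using assms by (intro ennreal_mult) auto
  moreover have "ennreal (m\<^sup>2 / n * (a / m) * (b / m)) = ennreal (m\<^sup>2 / n * (a / m)) * ennreal (b / m)"
    using assms by (intro ennreal_mult) auto
  moreover have "m\<^sup>2 / n * (a / m) * (b / m) = a * b / n"
    using assms by (simp add: field_simps power2_eq_square)
  ultimately show ?thesis
    by metis
qed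

lemma prob_space_cells_measure:
  assumes "0 < m" "0 < n"
  shows "prob_space (cells_measure m n cs rs)"
proof
  have cell: "emeasure lborel {c / m..(c + 1) / m} = ennreal (1 / m)" for c
    using assms by (simp add: divide_le_cancel diff_divide_distrib[symmetric])
  have "emeasure (cells_measure m n cs rs) (UNIV \<times> UNIV) = (\<Sum>k<n. ennreal (1 * 1 / n))"
    using emeasure_cells_measure_Times[of UNIV UNIV m n cs rs] assms
    by (simp add: cell ennreal_cell_product[of m 1 1, simplified])
  also have "\<dots> = 1"
    using assms by (simp add: ennreal_of_nat_eq_real_of_nat flip: ennreal_mult')
  finally show "emeasure (cells_measure m n cs rs) (space (cells_measure m n cs rs)) = 1"
    by simp
qed

lemma measure_cells_measure_Icc:
  assumes "0 < m" "\<And>k. k < n \<Longrightarrow> 0 \<le> cs k" "\<And>k. k < n \<Longrightarrow> 0 \<le> rs k"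
  shows "measure (cells_measure m n cs rs) ({0..u1} \<times> {0..u2})
    = (\<Sum>k<n. ramp (m * u1 - cs k) * ramp (m * u2 - rs k) / n)"
proof -
  have "emeasure (cells_measure m n cs rs) ({0..u1} \<times> {0..u2})
      = (\<Sum>k<n. ennreal (ramp (m * u1 - cs k) * ramp (m * u2 - rs k) / n))"
    using assms by (simp add: emeasure_cells_measure_Times emeasure_lborel_cell_Int_Icc ennreal_cell_product
        del: Int_atLeastAtMost)
  also have "\<dots> = ennreal (\<Sum>k<n. ramp (m * u1 - cs k) * ramp (m * u2 - rs k) / n)"
    by (intro sum_ennreal) auto
  finally show ?thesis
    by (simp add: measure_def sum_nonneg)
qed

definition quarter :: "real \<Rightarrow> nat" where
  "quarter t = (if t < 1/4 then 0 else if t < 1/2 then 1 else if t < 3/4 then 2 else 3)"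

lemma quarter_less_4 [simp]: "quarter t < 4"
  by (simp add: quarter_def)

lemma measurable_comp_quarter:
  assumes "\<And>j. f j \<in> space N"
  shows "(\<lambda>t. f (quarter t)) \<in> restrict_space lborel unit_I \<rightarrow>\<^sub>M N"
  unfolding quarter_def if_distrib[of f]
  by (intro measurable_If measurable_const assms) (auto simp: sets_restrict_space_iff)

lemma has_integral_comp_quarter:
  fixes f :: "nat \<Rightarrow> real"
  assumes "0 \<le> v" "v \<le> 1"
  shows "((\<lambda>t. f (quarter t)) has_integral (\<Sum>j<4. f j * ramp (4 * v - j) / 4)) {0..v}"
proof -
  have piece: "((\<lambda>t. if t \<in> {real j / 4..real (j + 1) / 4} then f j else 0)
      has_integral (f j * ramp (4 * v - j) / 4)) {0..v}" for j
    unfolding has_integral_restrict_Int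
  proof (cases "real j / 4 \<le> v")
    case True
    with assms have "{real j / 4..real (j + 1) / 4} \<inter> {0..v} = {real j / 4..min (real (j + 1) / 4) v}"
      by auto
    moreover have "((\<lambda>t. f j) has_integral (f j * ramp (4 * v - j) / 4)) {real j / 4..min (real (j + 1) / 4) v}"
      by (rule has_integral_eq_rhs[OF has_integral_const_real])
        (use True in \<open>auto simp: ramp_def min_def max_def field_simps\<close>)
    ultimately show "((\<lambda>t. f j) has_integral (f j * ramp (4 * v - j) / 4))
        ({real j / 4..real (j + 1) / 4} \<inter> {0..v})"
      by simp
  next
    case False
    then have "ramp (4 * v - j) = 0"
      by (intro ramp_eq_0) simp
    with False show "((\<lambda>t. f j) has_integral (f j * ramp (4 * v - j) / 4))
        ({real j / 4..real (j + 1) / 4} \<inter> {0..v})"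
      by (simp add: Int_absorb2)
  qed
  have "((\<lambda>t. \<Sum>j<4. if t \<in> {real j / 4..real (j + 1) / 4} then f j else 0)
      has_integral (\<Sum>j<4. f j * ramp (4 * v - j) / 4)) {0..v}"
    by (intro has_integral_sum piece) simp
  then show ?thesis
    by (rule has_integral_spike_finite[where S="{1/4, 1/2, 3/4}", rotated 2])
      (use assms in \<open>auto simp: quarter_def lessThan_nat_numeral\<close>)
qed

lemma integral_comp_quarter_unit:
  fixes f :: "nat \<Rightarrow> real"
  shows "integral unit_I (\<lambda>t. f (quarter t)) = (\<Sum>j<4. f j) / 4"
  using has_integral_comp_quarter[of 1 f]
  by (simp add: integral_unique ramp_eq_1 sum_divide_distrib)

section \<open>Versions of conditional kernels and copulas\<close>

lemma integral_cong_AE_lborel: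
  fixes f g :: "real \<Rightarrow> real"
  assumes "AE t in lborel. t \<in> S \<longrightarrow> f t = g t"
  shows "integral S f = integral S g"
proof -
  obtain N where N: "{t \<in> space lborel. \<not> (t \<in> S \<longrightarrow> f t = g t)} \<subseteq> N"
    "emeasure lborel N = 0" "N \<in> sets lborel"
    using assms by (rule AE_E)
  then have "N \<in> null_sets lborel"
    by auto
  then have "negligible N"
    using negligible_iff_null_sets null_sets_completionI by blast
  then show ?thesis
    by (rule integral_spike) (use N in auto)
qed

lemma abs_integral_Icc_le:
  fixes f :: "real \<Rightarrow> real"
  assumes "a \<le> b" and bound: "\<And>t. t \<in> {a..b} \<Longrightarrow> \<bar>f t\<bar> \<le> B"
  shows "\<bar>integral {a..b} f\<bar> \<le> B * (b - a)"
proof (cases "f integrable_on {a..b}")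
  case True
  have "- B \<le> f t" "f t \<le> B" if "t \<in> {a..b}" for t
    using bound[OF that] by auto
  then have "integral {a..b} f \<le> integral {a..b} (\<lambda>_. B)"
    by (intro integral_le[OF True integrable_const_ivl])
  moreover have "integral {a..b} (\<lambda>_. - B) \<le> integral {a..b} f"
    using \<open>\<And>t. t \<in> {a..b} \<Longrightarrow> - B \<le> f t\<close> by (intro integral_le[OF integrable_const_ivl True])
  moreover have "integral {a..b} (\<lambda>_. B) = B * (b - a)" "integral {a..b} (\<lambda>_. - B) = - (B * (b - a))"
    using assms(1) by simp_all
  ultimately show ?thesis
    by linarith
next
  case False
  have "0 \<le> B"
    using bound[of a] assms(1) by fastforce
  with False assms(1) show ?thesis
    by (simp add: not_integrable_integral)
qed

lemma AE_eq_if_same_integrals_on_unit: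
  fixes f g :: "real \<Rightarrow> real"
  assumes meas: "(\<lambda>t. ennreal (f t) * indicator unit_I t) \<in> borel_measurable lborel"
      "(\<lambda>t. ennreal (g t) * indicator unit_I t) \<in> borel_measurable lborel"
    and nonneg: "\<And>t. t \<in> unit_I \<Longrightarrow> 0 \<le> f t" "\<And>t. t \<in> unit_I \<Longrightarrow> 0 \<le> g t"
    and integrable: "\<And>v. v \<in> unit_I \<Longrightarrow> f integrable_on {0..v}" "\<And>v. v \<in> unit_I \<Longrightarrow> g integrable_on {0..v}"
    and same: "\<And>v. v \<in> unit_I \<Longrightarrow> integral {0..v} f = integral {0..v} g"
  shows "AE t in lborel. t \<in> unit_I \<longrightarrow> f t = g t"
proof -
  define F where "F h = density lborel (\<lambda>t. ennreal (h t) * indicator unit_I t)" for h :: "real \<Rightarrow> real"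
  have atMost: "emeasure (F h) {..x} = (if x < 0 then 0 else ennreal (integral {0..min x 1} h))"
    if "(\<lambda>t. ennreal (h t) * indicator unit_I t) \<in> borel_measurable lborel"
      "\<And>t. t \<in> unit_I \<Longrightarrow> 0 \<le> h t" "\<And>v. v \<in> unit_I \<Longrightarrow> h integrable_on {0..v}" for h x
  proof -
    have eq: "emeasure (F h) {..x} = (\<integral>\<^sup>+ t. ennreal (h t) * indicator {0..min x 1} t \<partial>lborel)"
      unfolding F_def using that(1)
      by (subst emeasure_density) (auto intro!: nn_integral_cong split: split_indicator)
    show ?thesis
    proof (cases "x < 0")
      case False
      then have "(h has_integral integral {0..min x 1} h) {0..min x 1}"
        using that(3)[of "min x 1"] by (simp add: integrable_integral)
      then have "(\<integral>\<^sup>+ t. ennreal (h t) * indicator {0..min x 1} t \<partial>lborel) = ennreal (integral {0..min x 1} h)"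
        by (rule nn_integral_has_integral_lebesgue'[rotated]) (use that(2) in auto)
      with eq False show ?thesis
        by simp
    qed (use eq in simp)
  qed
  have finite_F: "finite_borel_measure (F h)"
    if "(\<lambda>t. ennreal (h t) * indicator unit_I t) \<in> borel_measurable lborel"
      "\<And>t. t \<in> unit_I \<Longrightarrow> 0 \<le> h t" "\<And>v. v \<in> unit_I \<Longrightarrow> h integrable_on {0..v}" for h
  proof -
    have "(h has_integral integral unit_I h) unit_I"
      using that(3)[of 1] by (simp add: integrable_integral)
    then have "emeasure (F h) (space (F h)) = ennreal (integral unit_I h)"
      unfolding F_def using that(1,2)
      by (subst emeasure_density) (auto intro: nn_integral_has_integral_lebesgue')
    then have "finite_measure (F h)"
      by (intro finite_measureI) simp
    then show ?thesis
      by (simp add: finite_borel_measure_def finite_borel_measure_axioms_def F_def)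
  qed
  have "cdf (F f) = cdf (F g)"
    unfolding cdf_def measure_def
    using atMost[OF meas(1) nonneg(1) integrable(1)] atMost[OF meas(2) nonneg(2) integrable(2)] same
    by auto
  then have "F f = F g"
    using finite_F[OF meas(1) nonneg(1) integrable(1)] finite_F[OF meas(2) nonneg(2) integrable(2)]
    by (intro cdf_unique')
  then have "AE t in lborel. ennreal (f t) * indicator unit_I t = ennreal (g t) * indicator unit_I t"
    unfolding F_def by (rule sigma_finite_measure.density_unique[OF sigma_finite_lborel meas])
  then show ?thesis
    by (rule AE_mp) (auto intro!: AE_I2 simp: nonneg)
qed

lemma cond_kernel_prob_space: "cond_kernel C K \<Longrightarrow> t \<in> unit_I \<Longrightarrow> prob_space (K t)"
  unfolding cond_kernel_def
  using measurable_space[of K "restrict_space lborel unit_I" "prob_algebra borel" t]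
  by (auto simp: space_prob_algebra space_restrict_space)

lemma F13_in_unit: "cond_kernel C K \<Longrightarrow> t \<in> unit_I \<Longrightarrow> F13 K t u \<in> unit_I"
  and F23_in_unit: "cond_kernel C K \<Longrightarrow> t \<in> unit_I \<Longrightarrow> F23 K t u \<in> unit_I"
  using prob_space.prob_le_1[OF cond_kernel_prob_space] by (simp_all add: F13_def F23_def)

lemma measurable_cond_kernel_Icc:
  assumes "cond_kernel C K"
  shows "(\<lambda>t. ennreal (measure (K t) ({0..a} \<times> {0..b})) * indicator unit_I t) \<in> borel_measurable lborel"
proof -
  have "{0..a} \<times> {0..b} \<in> sets (borel :: (real \<times> real) measure)"
    by (metis borel_prod pair_measureI sets_lborel atLeastAtMost_borel)
  then have "(\<lambda>t. measure (K t) ({0..a} \<times> {0..b})) \<in> borel_measurable (restrict_space lborel unit_I)"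
    using assms unfolding cond_kernel_def by (auto intro: measurable_compose measurable_measure_prob_algebra)
  then show ?thesis
    by (subst borel_measurable_restrict_space_iff_ennreal[symmetric]) (auto intro: measurable_compose)
qed

lemma cond_kernel_Icc_AE_unique:
  assumes K1: "cond_kernel C K1" and K2: "cond_kernel C K2" and ab: "a \<in> unit_I" "b \<in> unit_I"
  shows "AE t in lborel. t \<in> unit_I \<longrightarrow> measure (K1 t) ({0..a} \<times> {0..b}) = measure (K2 t) ({0..a} \<times> {0..b})"
proof (rule AE_eq_if_same_integrals_on_unit[OF measurable_cond_kernel_Icc[OF K1] measurable_cond_kernel_Icc[OF K2]])
  fix v assume v: "v \<in> unit_I"
  show "(\<lambda>t. measure (K1 t) ({0..a} \<times> {0..b})) integrable_on {0..v}"
    "(\<lambda>t. measure (K2 t) ({0..a} \<times> {0..b})) integrable_on {0..v}"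
    using K1 K2 ab v unfolding cond_kernel_def by blast+
  have "C a b v = integral {0..v} (\<lambda>t. measure (K1 t) ({0..a} \<times> {0..b}))"
    "C a b v = integral {0..v} (\<lambda>t. measure (K2 t) ({0..a} \<times> {0..b}))"
    using K1 K2 ab v unfolding cond_kernel_def by blast+
  then show "integral {0..v} (\<lambda>t. measure (K1 t) ({0..a} \<times> {0..b}))
      = integral {0..v} (\<lambda>t. measure (K2 t) ({0..a} \<times> {0..b}))"
    by simp
qed simp_all

lemma copula2_in_unit:
  assumes "copula2 C" "x \<in> unit_I" "y \<in> unit_I"
  shows "C x y \<in> unit_I"
proof -
  have boundary: "\<forall>u\<in>unit_I. C u 0 = 0 \<and> C 0 u = 0 \<and> C u 1 = u \<and> C 1 u = u"
    and increasing: "\<And>a1 b1 a2 b2. a1 \<in> unit_I \<Longrightarrow> b1 \<in> unit_I \<Longrightarrow> a2 \<in> unit_I \<Longrightarrow> b2 \<in> unit_I \<Longrightarrow>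
        a1 \<le> b1 \<Longrightarrow> a2 \<le> b2 \<Longrightarrow> C b1 b2 - C a1 b2 - C b1 a2 + C a1 a2 \<ge> 0"
    using assms(1) unfolding copula2_def by blast+
  have "C x y - C 0 y - C x 0 + C 0 0 \<ge> 0" "C 1 y - C x y - C 1 0 + C x 0 \<ge> 0"
    using increasing[of 0 x 0 y] increasing[of x 1 0 y] assms(2,3) by auto
  with boundary assms(2,3) show ?thesis
    by auto
qed

lemma abs_partial_copula_le_1:
  assumes "cond_copulas K D" "x \<in> unit_I" "y \<in> unit_I"
  shows "\<bar>partial_copula D x y\<bar> \<le> 1"
proof -
  \<comment> \<open>\<open>D t\<close> is a copula only for almost every \<open>t\<close>, so first replace it by a bounded function\<close>
  have "AE t in lborel. t \<in> unit_I \<longrightarrow> D t x y = ramp (D t x y)"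
    using assms(1) unfolding cond_copulas_def
    by (rule AE_mp) (auto intro!: AE_I2 ramp_eq_self[symmetric] dest: copula2_in_unit[OF _ assms(2,3)])
  then have "partial_copula D x y = integral unit_I (\<lambda>t. ramp (D t x y))"
    unfolding partial_copula_def by (rule integral_cong_AE_lborel)
  also have "\<bar>\<dots>\<bar> \<le> 1"
    using abs_integral_Icc_le[of 0 1 "\<lambda>t. ramp (D t x y)" 1] by simp
  finally show ?thesis .
qed

lemma abs_psi_le_1:
  assumes K: "cond_kernel C K" and D: "cond_copulas K D" and v: "v \<in> unit_I"
  shows "\<bar>psi K D u1 u2 v\<bar> \<le> 1"
proof -
  have "\<bar>psi K D u1 u2 v\<bar> \<le> 1 * (v - 0)"
    unfolding psi_def using v
    by (intro abs_integral_Icc_le abs_partial_copula_le_1[OF D] F13_in_unit[OF K] F23_in_unit[OF K]) auto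
  with v show ?thesis
    by simp
qed

lemma abs_diff_le_d_inf:
  assumes C1: "\<And>x y z. z \<in> unit_I \<Longrightarrow> \<bar>C1 x y z\<bar> \<le> B" and C2: "\<And>x y z. z \<in> unit_I \<Longrightarrow> \<bar>C2 x y z\<bar> \<le> B"
    and "u1 \<in> unit_I" "u2 \<in> unit_I" "v \<in> unit_I"
  shows "\<bar>C1 u1 u2 v - C2 u1 u2 v\<bar> \<le> d_inf C1 C2"
  unfolding d_inf_def
proof (rule cSUP_upper2[where x="(u1, u2, v)"])
  have "\<bar>C1 x y z - C2 x y z\<bar> \<le> B + B" if "z \<in> unit_I" for x y z
    using abs_triangle_ineq4[of "C1 x y z" "C2 x y z"] C1[OF that, of x y] C2[OF that, of x y] by linarith
  then show "bdd_above ((\<lambda>x. \<bar>C1 (fst x) (fst (snd x)) (snd (snd x)) - C2 (fst x) (fst (snd x)) (snd (snd x))\<bar>)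
      ` (unit_I \<times> unit_I \<times> unit_I))"
    by (intro bdd_aboveI2[where M="B + B"]) auto
qed (use assms(3-5) in auto)

section \<open>The example\<close>

definition ex_cols :: "nat \<Rightarrow> nat \<Rightarrow> real" where
  "ex_cols j k = [[0,4,5,6], [1,2,4,7], [1,3,5,7], [0,2,3,6]] ! j ! k"

definition ex_rows :: "nat \<Rightarrow> nat \<Rightarrow> real" where
  "ex_rows j k = [[0,1,4,5], [2,4,6,7], [0,2,3,6], [1,3,5,7]] ! j ! k"

definition ex_perm :: "nat \<Rightarrow> nat \<Rightarrow> nat" where
  "ex_perm j k = [[1,3,2,0], [3,0,2,1], [2,1,3,0], [3,1,0,2]] ! j ! k"

definition ex_cell_cdf :: "nat \<Rightarrow> real \<Rightarrow> real \<Rightarrow> real" where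
  "ex_cell_cdf j u1 u2 = (\<Sum>k<4. ramp (8 * u1 - ex_cols j k) * ramp (8 * u2 - ex_rows j (ex_perm j k)) / 4)"

definition ex_copula :: "real \<Rightarrow> real \<Rightarrow> real \<Rightarrow> real" where
  "ex_copula u1 u2 v = (\<Sum>j<4. ex_cell_cdf j u1 u2 * ramp (4 * v - j) / 4)"

definition ex_kernel :: "real \<Rightarrow> (real \<times> real) measure" where
  "ex_kernel t = cells_measure 8 4 (ex_cols (quarter t)) (\<lambda>k. ex_rows (quarter t) (ex_perm (quarter t) k))"

definition ex_cond_copula :: "real \<Rightarrow> real \<Rightarrow> real \<Rightarrow> real" where
  "ex_cond_copula t = shuffle_copula 4 (ex_perm (quarter t))"

lemma less_4_cases: "(j::nat) < 4 \<Longrightarrow> j = 0 \<or> j = 1 \<or> j = 2 \<or> j = 3"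
  by auto

lemma ex_data_bounds:
  assumes "j < 4" "k < 4"
  shows "0 \<le> ex_cols j k" "ex_cols j k \<le> 7" "0 \<le> ex_rows j k" "ex_rows j k \<le> 7" "ex_perm j k < 4"
  using less_4_cases[OF assms(1)] less_4_cases[OF assms(2)]
  by (auto simp: ex_cols_def ex_rows_def ex_perm_def)

lemma ex_gaps:
  assumes "j < 4" "Suc i < 4"
  shows "ex_cols j i + 1 \<le> ex_cols j (Suc i)" "ex_rows j i + 1 \<le> ex_rows j (Suc i)"
proof -
  have "i = 0 \<or> i = 1 \<or> i = 2"
    using assms(2) by auto
  then show "ex_cols j i + 1 \<le> ex_cols j (Suc i)" "ex_rows j i + 1 \<le> ex_rows j (Suc i)"
    using less_4_cases[OF assms(1)] by (auto simp: ex_cols_def ex_rows_def)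
qed

lemma bij_betw_ex_perm: "j < 4 \<Longrightarrow> bij_betw (ex_perm j) {..<4} {..<4}"
  using less_4_cases[of j]
  by (auto simp: bij_betw_def inj_on_def ex_perm_def lessThan_nat_numeral)

lemma ex_cell_cdf_margin1:
  assumes "j < 4"
  shows "ex_cell_cdf j u 1 = (\<Sum>i<4. ramp (8 * u - ex_cols j i)) / 4"
  unfolding ex_cell_cdf_def sum_divide_distrib
proof (intro sum.cong refl)
  fix k :: nat assume "k \<in> {..<4}"
  then have "ramp (8 * 1 - ex_rows j (ex_perm j k)) = 1"
    using assms by (intro ramp_eq_1) (simp add: ex_data_bounds)
  then show "ramp (8 * u - ex_cols j k) * ramp (8 * 1 - ex_rows j (ex_perm j k)) / 4
      = ramp (8 * u - ex_cols j k) / 4"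
    by simp
qed

lemma ex_cell_cdf_margin2: "j < 4 \<Longrightarrow> ex_cell_cdf j 1 u = (\<Sum>i<4. ramp (8 * u - ex_rows j i)) / 4"
  unfolding ex_cell_cdf_def sum_divide_distrib
  using sum.reindex_bij_betw[OF bij_betw_ex_perm, of j "\<lambda>i. ramp (8 * u - ex_rows j i) / 4"]
  by (simp add: ramp_eq_1 ex_data_bounds)

lemma ex_cell_cdf_shuffle:
  assumes "j < 4"
  shows "ex_cell_cdf j u1 u2 = shuffle_copula 4 (ex_perm j) (ex_cell_cdf j u1 1) (ex_cell_cdf j 1 u2)"
  unfolding shuffle_copula_def ex_cell_cdf_margin1[OF assms] ex_cell_cdf_margin2[OF assms]
proof (simp add: ex_cell_cdf_def, intro sum.cong refl)
  fix k :: nat assume "k \<in> {..<4}"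
  then show "ramp (8 * u1 - ex_cols j k) * ramp (8 * u2 - ex_rows j (ex_perm j k)) / 4
    = ramp ((\<Sum>i<4. ramp (8 * u1 - ex_cols j i)) - k)
      * ramp ((\<Sum>i<4. ramp (8 * u2 - ex_rows j i)) - ex_perm j k) / 4"
    using assms bij_betwE[OF bij_betw_ex_perm[OF assms]]
    by (simp add: ramp_sum_staircase ex_gaps)
qed

lemma measure_ex_kernel_Icc: "measure (ex_kernel t) ({0..u1} \<times> {0..u2}) = ex_cell_cdf (quarter t) u1 u2"
  unfolding ex_kernel_def ex_cell_cdf_def
  by (subst measure_cells_measure_Icc) (auto simp: ex_data_bounds)

lemma F13_ex_kernel: "F13 ex_kernel t u = ex_cell_cdf (quarter t) u 1"
  and F23_ex_kernel: "F23 ex_kernel t u = ex_cell_cdf (quarter t) 1 u"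
  using measure_ex_kernel_Icc[of t u 1] measure_ex_kernel_Icc[of t 1 u] by (simp_all add: F13_def F23_def)

lemma ex_cell_cdf_in_unit: "ex_cell_cdf j u1 u2 \<in> unit_I"
proof -
  have "ex_cell_cdf j u1 u2 \<le> (\<Sum>k<4::nat. 1 / 4)"
    unfolding ex_cell_cdf_def by (intro sum_mono) (simp add: mult_le_one)
  then show ?thesis
    by (simp add: ex_cell_cdf_def sum_nonneg)
qed

lemma abs_ex_copula_le_1: "\<bar>ex_copula u1 u2 v\<bar> \<le> 1"
proof -
  have "ex_copula u1 u2 v \<le> (\<Sum>j<4::nat. 1 / 4)"
    unfolding ex_copula_def using ex_cell_cdf_in_unit by (intro sum_mono) (simp add: mult_le_one)
  moreover have "0 \<le> ex_copula u1 u2 v"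
    unfolding ex_copula_def using ex_cell_cdf_in_unit by (intro sum_nonneg) simp
  ultimately show ?thesis
    by simp
qed

lemma ex_copula_copula3: "copula3 ex_copula"
  unfolding copula3_def
proof (intro conjI ballI impI)
  fix x y :: real
  show "ex_copula 0 x y = 0" "ex_copula x 0 y = 0" "ex_copula x y 0 = 0"
    by (auto intro!: sum.neutral simp: ex_copula_def ex_cell_cdf_def ramp_eq_0 ex_data_bounds)
next
  fix u :: real assume u: "u \<in> unit_I"
  have "ex_copula 1 1 u = (\<Sum>j<4::nat. ramp (4 * u - j)) / 4"
    unfolding ex_copula_def sum_divide_distrib
    by (intro sum.cong refl) (simp add: ex_cell_cdf_margin1 ramp_eq_1 ex_data_bounds)
  then show "ex_copula 1 1 u = u"
    using sum_ramp_shifts_eq[of "4 * u" 4] u by simp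
  have cols: "(\<Sum>j<4. \<Sum>i<4. ramp (8 * u - ex_cols j i)) = 2 * (\<Sum>c<8::nat. ramp (8 * u - c))"
    by (simp add: lessThan_nat_numeral ex_cols_def)
  have "ex_copula u 1 1 = (\<Sum>j<4. \<Sum>i<4. ramp (8 * u - ex_cols j i)) / 16"
    unfolding ex_copula_def sum_divide_distrib
    by (intro sum.cong refl) (simp add: ex_cell_cdf_margin1 ramp_eq_1 sum_divide_distrib)
  then show "ex_copula u 1 1 = u"
    using sum_ramp_shifts_eq[of "8 * u" 8] u by (simp add: cols)
  have rows: "(\<Sum>j<4. \<Sum>i<4. ramp (8 * u - ex_rows j i)) = 2 * (\<Sum>c<8::nat. ramp (8 * u - c))"
    by (simp add: lessThan_nat_numeral ex_rows_def)
  have "ex_copula 1 u 1 = (\<Sum>j<4. \<Sum>i<4. ramp (8 * u - ex_rows j i)) / 16"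
    unfolding ex_copula_def sum_divide_distrib
    by (intro sum.cong refl) (simp add: ex_cell_cdf_margin2 ramp_eq_1 sum_divide_distrib)
  then show "ex_copula 1 u 1 = u"
    using sum_ramp_shifts_eq[of "8 * u" 8] u by (simp add: rows)
next
  fix a1 b1 a2 b2 a3 b3 :: real
  assume "a1 \<le> b1" "a2 \<le> b2" "a3 \<le> b3"
  moreover have "ex_cell_cdf j b1 b2 - ex_cell_cdf j a1 b2 - ex_cell_cdf j b1 a2 + ex_cell_cdf j a1 a2 \<ge> 0" for j
    unfolding ex_cell_cdf_def
    using two_increasing_sum_of_products[where S="{..<4}" and f="\<lambda>k x. ramp (8 * x - ex_cols j k) / 4"
        and g="\<lambda>k y. ramp (8 * y - ex_rows j (ex_perm j k))"]
      \<open>a1 \<le> b1\<close> \<open>a2 \<le> b2\<close>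
    by (simp add: mono_ramp_affine mono_ramp_affine_scaled)
  ultimately show "0 \<le> ex_copula b1 b2 b3 - ex_copula a1 b2 b3 - ex_copula b1 a2 b3 - ex_copula b1 b2 a3
      + ex_copula a1 a2 b3 + ex_copula a1 b2 a3 + ex_copula b1 a2 a3 - ex_copula a1 a2 a3"
    unfolding ex_copula_def
    using three_increasing_sum_of_products[where S="{..<4}" and h="\<lambda>j v. ramp (4 * v - j) / 4"
        and G=ex_cell_cdf]
    by (simp add: mono_ramp_affine_scaled)
qed

lemma ex_kernel_cond_kernel: "cond_kernel ex_copula ex_kernel"
  unfolding cond_kernel_def
proof (intro conjI ballI)
  show "ex_kernel \<in> restrict_space lborel unit_I \<rightarrow>\<^sub>M prob_algebra borel"
    unfolding ex_kernel_def
    by (intro measurable_comp_quarter[where f="\<lambda>j. cells_measure 8 4 (ex_cols j) (\<lambda>k. ex_rows j (ex_perm j k))"])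
      (simp add: space_prob_algebra prob_space_cells_measure)
  fix u1 u2 v :: real assume "v \<in> unit_I"
  then have "((\<lambda>t. measure (ex_kernel t) ({0..u1} \<times> {0..u2})) has_integral ex_copula u1 u2 v) {0..v}"
    unfolding measure_ex_kernel_Icc ex_copula_def by (intro has_integral_comp_quarter) auto
  then show "(\<lambda>t. measure (ex_kernel t) ({0..u1} \<times> {0..u2})) integrable_on {0..v}"
    and "ex_copula u1 u2 v = integral {0..v} (\<lambda>t. measure (ex_kernel t) ({0..u1} \<times> {0..u2}))"
    by (auto simp: has_integral_iff)
qed

lemma ex_cond_copulas: "cond_copulas ex_kernel ex_cond_copula"
  unfolding cond_copulas_def
proof (intro AE_I2 impI conjI ballI)
  fix t u1 u2 :: real
  show "copula2 (ex_cond_copula t)"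
    unfolding ex_cond_copula_def by (intro shuffle_copula_copula2 bij_betw_ex_perm) simp_all
  show "measure (ex_kernel t) ({0..u1} \<times> {0..u2}) = ex_cond_copula t (F13 ex_kernel t u1) (F23 ex_kernel t u2)"
    unfolding measure_ex_kernel_Icc F13_ex_kernel F23_ex_kernel ex_cond_copula_def
    by (rule ex_cell_cdf_shuffle) simp
qed

lemma ex_copula_copula3_c: "copula3_c ex_copula"
  unfolding copula3_c_def
proof (intro conjI ex_copula_copula3 exI[of _ ex_kernel] ex_kernel_cond_kernel AE_I2 impI)
  fix t :: real
  have "F13 ex_kernel t = (\<lambda>u. ex_cell_cdf (quarter t) u 1)" "F23 ex_kernel t = (\<lambda>u. ex_cell_cdf (quarter t) 1 u)"
    by (simp_all add: fun_eq_iff F13_ex_kernel F23_ex_kernel)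
  then show "continuous_on UNIV (F13 ex_kernel t)" "continuous_on UNIV (F23 ex_kernel t)"
    by (simp_all add: ex_cell_cdf_def continuous_intros)
qed

definition eighths :: "real set" where
  "eighths = {0, 1/8, 2/8, 3/8, 4/8, 5/8, 6/8, 7/8, 1}"

definition inner_quarters :: "real set" where
  "inner_quarters = {1/4, 1/2, 3/4}"

lemma ex_margins_attain_inner_quarters:
  assumes "j < 4" "x \<in> inner_quarters"
  shows "\<exists>a\<in>eighths. ex_cell_cdf j a 1 = x" "\<exists>b\<in>eighths. ex_cell_cdf j 1 b = x"
  using less_4_cases[OF assms(1)] assms(2)
  by (auto simp: ex_cell_cdf_margin1[OF assms(1)] ex_cell_cdf_margin2[OF assms(1)] lessThan_nat_numeral
      ex_cols_def ex_rows_def eighths_def inner_quarters_def ramp_def)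

lemma ex_margins_at_half:
  assumes "j < 4"
  shows "ex_cell_cdf j (1/2) 1 \<in> inner_quarters" "ex_cell_cdf j 1 (1/2) \<in> inner_quarters"
  using less_4_cases[OF assms(1)]
  by (auto simp: ex_cell_cdf_margin1[OF assms(1)] ex_cell_cdf_margin2[OF assms(1)] lessThan_nat_numeral
      ex_cols_def ex_rows_def inner_quarters_def ramp_def)

lemma ex_copula_value: "ex_copula (1/2) (1/2) 1 = 3/8"
  by (simp add: ex_copula_def ex_cell_cdf_def lessThan_nat_numeral ex_cols_def ex_rows_def ex_perm_def ramp_def)

lemma partial_copula_ex_cond_copula:
  "partial_copula ex_cond_copula x y = (\<Sum>j<4. shuffle_copula 4 (ex_perm j) x y) / 4"
  unfolding partial_copula_def ex_cond_copula_def
  by (rule integral_comp_quarter_unit)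

lemma psi_ex_value: "psi ex_kernel ex_cond_copula (1/2) (1/2) 1 = 3/16"
proof -
  have "psi ex_kernel ex_cond_copula (1/2) (1/2) 1
      = (\<Sum>j<4. partial_copula ex_cond_copula (ex_cell_cdf j (1/2) 1) (ex_cell_cdf j 1 (1/2))) / 4"
    unfolding psi_def F13_ex_kernel F23_ex_kernel
    by (rule integral_comp_quarter_unit)
  also have "\<dots> = 3/16"
    by (simp add: partial_copula_ex_cond_copula ex_cell_cdf_margin1 ex_cell_cdf_margin2 shuffle_copula_def
        lessThan_nat_numeral ex_cols_def ex_rows_def ex_perm_def ramp_def)
  finally show ?thesis .
qed

lemma ex_versions_agree:
  assumes K: "cond_kernel ex_copula K" and D: "cond_copulas K D"
  shows "AE t in lborel. t \<in> unit_I \<longrightarrow>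
    (\<forall>x\<in>inner_quarters. \<forall>y\<in>inner_quarters. D t x y = ex_cond_copula t x y) \<and>
    F13 K t (1/2) = F13 ex_kernel t (1/2) \<and> F23 K t (1/2) = F23 ex_kernel t (1/2)"
proof -
  have "AE t in lborel. \<forall>a\<in>eighths. \<forall>b\<in>eighths. t \<in> unit_I \<longrightarrow>
      measure (K t) ({0..a} \<times> {0..b}) = measure (ex_kernel t) ({0..a} \<times> {0..b})"
    by (intro AE_finite_allI cond_kernel_Icc_AE_unique[OF K ex_kernel_cond_kernel]) (auto simp: eighths_def)
  moreover have "AE t in lborel. t \<in> unit_I \<longrightarrow> copula2 (D t) \<and>
      (\<forall>u1\<in>unit_I. \<forall>u2\<in>unit_I. measure (K t) ({0..u1} \<times> {0..u2}) = D t (F13 K t u1) (F23 K t u2))"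
    using D unfolding cond_copulas_def .
  ultimately show ?thesis
  proof eventually_elim
    case (elim t)
    show ?case
    proof (intro impI conjI ballI)
      assume t: "t \<in> unit_I"
      have eighths_unit: "a \<in> unit_I" if "a \<in> eighths" for a
        using that by (auto simp: eighths_def)
      have rect: "measure (K t) ({0..a} \<times> {0..b}) = ex_cell_cdf (quarter t) a b"
        if "a \<in> eighths" "b \<in> eighths" for a b
        using elim(1) that t by (simp add: measure_ex_kernel_Icc)
      have one: "1 \<in> eighths" and half: "1/2 \<in> eighths"
        by (simp_all add: eighths_def)
      show "F13 K t (1/2) = F13 ex_kernel t (1/2)" "F23 K t (1/2) = F23 ex_kernel t (1/2)"
        unfolding F13_ex_kernel F23_ex_kernel using rect[OF half one] rect[OF one half]
        by (simp_all add: F13_def F23_def)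
      fix x y assume "x \<in> inner_quarters" "y \<in> inner_quarters"
      then obtain a b where ab: "a \<in> eighths" "b \<in> eighths"
        and x: "ex_cell_cdf (quarter t) a 1 = x" and y: "ex_cell_cdf (quarter t) 1 b = y"
        using ex_margins_attain_inner_quarters[OF quarter_less_4] by blast
      have "F13 K t a = x" "F23 K t b = y"
        using rect[OF ab(1) one] rect[OF one ab(2)] x y by (simp_all add: F13_def F23_def)
      then have "D t x y = measure (K t) ({0..a} \<times> {0..b})"
        using elim(2) t eighths_unit[OF ab(1)] eighths_unit[OF ab(2)] by simp
      also have "\<dots> = ex_cond_copula t x y"
        unfolding rect[OF ab] ex_cond_copula_def using ex_cell_cdf_shuffle[OF quarter_less_4, of t a b]
        by (simp add: x y)
      finally show "D t x y = ex_cond_copula t x y" .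
    qed
  qed
qed

lemma psi_ex_versions:
  assumes K: "cond_kernel ex_copula K" and D: "cond_copulas K D"
  shows "psi K D (1/2) (1/2) 1 = psi ex_kernel ex_cond_copula (1/2) (1/2) 1"
proof -
  note agree = ex_versions_agree[OF K D]
  have partial: "partial_copula D x y = partial_copula ex_cond_copula x y"
    if "x \<in> inner_quarters" "y \<in> inner_quarters" for x y
    unfolding partial_copula_def
    by (rule integral_cong_AE_lborel, rule AE_mp[OF agree]) (use that in auto)
  show ?thesis
    unfolding psi_def
  proof (rule integral_cong_AE_lborel, rule AE_mp[OF agree], intro AE_I2 impI)
    fix t :: real
    assume "t \<in> unit_I \<longrightarrow> (\<forall>x\<in>inner_quarters. \<forall>y\<in>inner_quarters. D t x y = ex_cond_copula t x y) \<and>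
        F13 K t (1/2) = F13 ex_kernel t (1/2) \<and> F23 K t (1/2) = F23 ex_kernel t (1/2)"
      and "t \<in> {0..1}"
    then have "F13 K t (1/2) = F13 ex_kernel t (1/2)" "F23 K t (1/2) = F23 ex_kernel t (1/2)"
      by simp_all
    moreover have "F13 ex_kernel t (1/2) \<in> inner_quarters" "F23 ex_kernel t (1/2) \<in> inner_quarters"
      by (simp_all add: F13_ex_kernel F23_ex_kernel ex_margins_at_half)
    ultimately show "partial_copula D (F13 K t (1/2)) (F23 K t (1/2))
        = partial_copula ex_cond_copula (F13 ex_kernel t (1/2)) (F23 ex_kernel t (1/2))"
      using partial by simp
  qed
qed

theorem theorem5p6:
  shows "\<exists>C. copula3_c C \<and>
           (\<exists>K D. cond_kernel C K \<and> cond_copulas K D) \<and>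
           (\<forall>K D. cond_kernel C K \<longrightarrow> cond_copulas K D \<longrightarrow> d_inf C (psi K D) \<ge> 3/16)"
proof (intro exI[of _ ex_copula] conjI allI impI)
  show "copula3_c ex_copula"
    by (rule ex_copula_copula3_c)
  show "\<exists>K D. cond_kernel ex_copula K \<and> cond_copulas K D"
    using ex_kernel_cond_kernel ex_cond_copulas by blast
  fix K D assume K: "cond_kernel ex_copula K" and D: "cond_copulas K D"
  have "3/16 = \<bar>ex_copula (1/2) (1/2) 1 - psi K D (1/2) (1/2) 1\<bar>"
    by (simp add: ex_copula_value psi_ex_versions[OF K D] psi_ex_value)
  also have "\<dots> \<le> d_inf ex_copula (psi K D)"
    by (rule abs_diff_le_d_inf[where B=1]) (auto intro: abs_ex_copula_le_1 abs_psi_le_1[OF K D])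
  finally show "d_inf ex_copula (psi K D) \<ge> 3/16" .
qed

end
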